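(* Let $(X,\beta)$ be a finite wGKAT automaton and let $\bar\partial$ be the unique transition map on $\mathrm{Exp}/{\equiv}$ making the quotient map $[-]_\equiv:\mathrm{Exp}\to\mathrm{Exp}/{\equiv}$ a homomorphism from $(\mathrm{Exp},\partial)$ to $(\mathrm{Exp}/{\equiv},\bar\partial)$. A map $h:X\to\mathrm{Exp}$ is a solution up to $\equiv$ of the system associated with $(X,\beta)$ if and only if $[-]_\equiv\circ h$ is a homomorphism of wGKAT automata from $(X,\beta)$ to $(\mathrm{Exp}/{\equiv},\bar\partial)$.
   Context: Fix a finite set $T$ of primitive tests, a set $\mathrm{Act}$ of atomic actions, a set $\mathrm{Out}$ of return values, and a semiring $(S,+,\cdot,0,1)$ that is positive ($x+y=0\Rightarrow x=y=0$), refinement (whenever $x+y=z+w$ there exist $s,t,u,v$ with $s+t=x$, $s+u=z$, $u+v=y$, $t+v=w$) and Conway (with ${}^*:S\to S$ satisfying $(a+b)^*=a^*(ba^* )^*$, $(ab)^*=1+a(ba)^*b$). Tests: $b,c\in\mathrm{BExp}::=\mathtt{0}\mid\mathtt{1}\mid t\ (t\in T)\mid\bar b\mid b+c\mid bc$ ($\mathtt 0,\mathtt 1$ false/true, distinct from semiring $0,1$); $\equiv_{BA}$ is Boolean equivalence; $\mathrm{At}$ is the finite set of atoms of the free Boolean algebra on $T$, atoms also regarded as tests; $\alpha\le b$ means $\alpha$ entails $b$. Expressions: $e,f\in\mathrm{Exp}::= p\in\mathrm{Act}\mid b\in\mathrm{BExp}\mid e+_b f\mid e;f\mid e^{(b)}\mid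 v\in\mathrm{Out}\mid e\oplus_{r,s} f\ (r,s\in S)$; $\odot r:=\mathtt 1\oplus_{r,0}\mathtt 0$. $\mathcal M_\omega(X)$: finitely supported maps $X\to S$, pointwise operations; $\delta_x$ indicator of $x$; $\nu[A]=\sum_{x\in A}\nu(x)$; $\mathrm{supp}(\nu)=\{x:\nu(x)\ne0\}$. A wGKAT automaton is $(X,\beta)$ with $\beta:X\to\mathcal M_\omega(\{\mathsf{acc},\mathsf{rej}\}+\mathrm{Out}+\mathrm{Act}\times X)^{\mathrm{At}}$. A map $h:X\to Y$ between automata $(X,\beta),(Y,\gamma)$ is a homomorphism if for all $x,\alpha$: $\gamma(h(x))_\alpha(o)=\beta(x)_\alpha(o)$ for $o\in\{\mathsf{acc},\mathsf{rej}\}+\mathrm{Out}$, and $\gamma(h(x))_\alpha(p,y)=\beta(x)_\alpha[\{p\}\times h^{-1}(y)]$. The derivative automaton $(\mathrm{Exp},\partial)$: $\partial(b)_\alpha=\delta_{\mathsf{acc}}$ if $\alpha\le b$, else $\delta_{\mathsf{rej}}$; $\partial(v)_\alpha=\delta_v$; $\partial(p)_\alpha=\delta_{(p,\mathtt 1)}$; $\partial(e+_bf)_\alpha=\partial(e)_\alpha$ if $\alpha\le b$, else $\partial(f)_\alpha$; $\partial(e\oplus_{r,s}f)_\alpha=r\partial(e)_\alpha+s\partial(f)_\alpha$; $\partial(e;f)_\alpha=\sum_x\partial(e)_\alpha(x)c_{\alpha,f}(x)$ with $c_{\alpha,f}(\mathsf{acc})=\partial(f)_\alpha$, $c_{\alpha,f}(x)=\delta_x$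 for $x\in\{\mathsf{rej}\}\cup\mathrm{Out}$, $c_{\alpha,f}(p,e')=\delta_{(p,e';f)}$; $\partial(e^{(b)})_\alpha(x)$ is $1$ if $x=\mathsf{acc}$ and $\alpha\le\bar b$; $\partial(e)_\alpha(\mathsf{acc})^*\partial(e)_\alpha(x)$ if $x\in\{\mathsf{rej}\}\cup\mathrm{Out}$ and $\alpha\le b$; $\partial(e)_\alpha(\mathsf{acc})^*\partial(e)_\alpha(p,e')$ if $x=(p,e';e^{(b)})$ and $\alpha\le b$; $0$ otherwise. Generalized guarded sum: $\mathrm{GS}_{\alpha\in\emptyset}e_\alpha:=\mathtt 0$, $\mathrm{GS}_{\alpha\in\Phi}e_\alpha:=e_\gamma+_\gamma\mathrm{GS}_{\alpha\in\Phi\setminus\{\gamma\}}e_\alpha$ ($\gamma\in\Phi$); generalized weighted sum: $\bigoplus_{i\in I}r_i\cdot e_i:=e_j\oplus_{r_j,1}\big(\bigoplus_{i\in I\setminus\{j\}}r_i\cdot e_i\big)$ ($j\in I$), the empty weighted sum being $\odot0$; both well defined up to $\equiv$. The system associated with $(X,\beta)$ assigns to each $x\in X$ the formal term $\tau(x)=\mathrm{GS}_{\alpha\in\mathrm{At}}\big(\bigoplus_{d\in\mathrm{supp}(\beta(x)_\alpha)}\beta(x)_\alpha(d)\cdot\mathrm{sys}(d)\big)$ with $\mathrm{sys}(\mathsf{rej})=\mathtt 0$, $\mathrm{sys}(\mathsf{acc})=\mathtt 1$, $\mathrm{sys}(v)=v$, $\mathrm{sys}(p,x')=p\,x'$ (a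 formal product of the expression $p$ with the indeterminate $x'$). For $h:X\to\mathrm{Exp}$, $h^\#(\tau(x))\in\mathrm{Exp}$ is obtained by replacing each formal product $g\,x'$ by $g;h(x')$ (and keeping expressions, guarded choices and weighted choices as they are). $h$ is a solution up to $\equiv$ if $h(x)\equiv h^\#(\tau(x))$ for all $x\in X$. $E:\mathrm{Exp}\to S^{\mathrm{At}}$: $E(p)_\alpha=E(v)_\alpha=0$; $E(b)_\alpha=1$ if $\alpha\le b$ else $0$; $E(e\oplus_{r,s}f)_\alpha=rE(e)_\alpha+sE(f)_\alpha$; $E(e+_bf)_\alpha=E(e)_\alpha$ if $\alpha\le b$ else $E(f)_\alpha$; $E(e;f)_\alpha=E(e)_\alpha E(f)_\alpha$; $E(e^{(b)})_\alpha=E(\bar b)_\alpha$. The relation $\equiv$ is the smallest congruence on $\mathrm{Exp}$ (tests taken up to $\equiv_{BA}$; sequencing binds tighter than $\oplus$, $\odot$ binds tightest) containing, for all $e,f,g\in\mathrm{Exp}$, tests $b,c$, $v\in\mathrm{Out}$, $r,s,t,u\in S$: (G1) $e+_be\equiv e$; (G2) $e+_bf\equiv b;e+_bf$; (G3) $e+_bf\equiv f+_{\bar b}e$; (G4) $(e+_bf)+_cg\equiv e+_{bc}(f+_cg)$; (D1) $e\oplus_{r,s}(f+_bg)\equiv(e\oplus_{r,s}f)+_b(e\oplus_{r,s}g)$; (D2) $e\oplus_{r,s}(f\oplus_{t,u}g)\equiv e\oplus_{r,1}(f\oplus_{st,su}g)$; (D3) $b;(e\oplus_{r,s}f)\equiv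 b;(b;e\oplus_{r,s}b;f)$; (S1) $\mathtt 1;e\equiv e\equiv e;\mathtt 1$; (S2) $(e;f);g\equiv e;(f;g)$; (S3) $\mathtt 0;e\equiv\mathtt 0$; (S4) $(e\oplus_{r,s}f);g\equiv e;g\oplus_{r,s}f;g$; (S5) $(e+_bf);g\equiv e;g+_bf;g$; (S6) $v;e\equiv v$; (S7) $b;c\equiv bc$; (L1) $e^{(b)}\equiv e;e^{(b)}+_b\mathtt 1$; (C1) $\odot1\equiv\mathtt 1$; (C2) $\odot0;e\equiv\odot0$; (W1) $e\oplus_{r,s}e\equiv\odot(r+s);e$; (W2) $e\oplus_{r,s}f\equiv f\oplus_{s,r}e$; (W3) $e\oplus_{r,s}(f\oplus_{t,u}g)\equiv(e\oplus_{r,st}f)\oplus_{1,su}g$; (W4) $e\oplus_{ru,s}f\equiv(\odot u;e)\oplus_{r,s}f$; and closed under the rules (L2) if $e\equiv(f\oplus_{r,s}\mathtt 1)+_cg$ then $c;e^{(b)}\equiv c;((\odot(s^*r);f;e^{(b)})+_b\mathtt 1)$; (F1) if $g\equiv e;g+_bf$ and $E(e)_\alpha=0$ for all $\alpha\in\mathrm{At}$ then $g\equiv e^{(b)};f$. *)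

theory Defs
  imports Main
begin

datatype 't bexp = BZero | BOne | BPrim 't | BNot "'t bexp" | BOr "'t bexp" "'t bexp" | BAnd "'t bexp" "'t bexp"

text \<open>Atoms of the free Boolean algebra on a finite set of primitive tests T (the type 't)
  are represented by valuations, i.e. the set of primitive tests that are true.
  "alpha entails b" is evaluation of b under alpha.\<close>

primrec beval :: "'t set \<Rightarrow> 't bexp \<Rightarrow> bool" where
  "beval \<alpha> BZero = False"
| "beval \<alpha> BOne = True"
| "beval \<alpha> (BPrim t) = (t \<in> \<alpha>)"
| "beval \<alpha> (BNot b) = (\<not> beval \<alpha> b)"
| "beval \<alpha> (BOr b c) = (beval \<alpha> b \<or> beval \<alpha> c)"
| "beval \<alpha> (BAnd b c) = (beval \<alpha> b \<and> beval \<alpha> c)"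

definition bequiv :: "'t bexp \<Rightarrow> 't bexp \<Rightarrow> bool" where
  "bequiv b c \<longleftrightarrow> (\<forall>\<alpha>. beval \<alpha> b = beval \<alpha> c)"

datatype ('t, 'p, 'v, 's) exp =
    Act 'p
  | Test "'t bexp"
  | GChoice "('t, 'p, 'v, 's) exp" "'t bexp" "('t, 'p, 'v, 's) exp"
  | Seq "('t, 'p, 'v, 's) exp" "('t, 'p, 'v, 's) exp"
  | Loop "('t, 'p, 'v, 's) exp" "'t bexp"
  | Ret 'v
  | WChoice "('t, 'p, 'v, 's) exp" 's 's "('t, 'p, 'v, 's) exp"

definition odot :: "'s \<Rightarrow> ('t, 'p, 'v, 's::zero) exp" where
  "odot r = WChoice (Test BOne) r 0 (Test BZero)"

datatype ('v, 'p, 'x) out = Acc | Rej | OutV 'v | Tr 'p 'x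

definition is_aut :: "'x set \<Rightarrow> ('x \<Rightarrow> 't set \<Rightarrow> ('v, 'p, 'x) out \<Rightarrow> 's::zero) \<Rightarrow> bool" where
  "is_aut X \<beta> \<longleftrightarrow> (\<forall>x\<in>X. \<forall>\<alpha>. finite {d. \<beta> x \<alpha> d \<noteq> 0} \<and>
       (\<forall>p x'. \<beta> x \<alpha> (Tr p x') \<noteq> 0 \<longrightarrow> x' \<in> X))"

definition mass :: "('a \<Rightarrow> 's::comm_monoid_add) \<Rightarrow> 'a set \<Rightarrow> 's" where
  "mass \<nu> A = sum \<nu> {a\<in>A. \<nu> a \<noteq> 0}"

definition is_hom :: "'x set \<Rightarrow> ('x \<Rightarrow> 't set \<Rightarrow> ('v, 'p, 'x) out \<Rightarrow> 's::comm_monoid_add)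
    \<Rightarrow> 'y set \<Rightarrow> ('y \<Rightarrow> 't set \<Rightarrow> ('v, 'p, 'y) out \<Rightarrow> 's) \<Rightarrow> ('x \<Rightarrow> 'y) \<Rightarrow> bool" where
  "is_hom X \<beta> Y \<gamma> h \<longleftrightarrow> (\<forall>x\<in>X. h x \<in> Y) \<and>
     (\<forall>x\<in>X. \<forall>\<alpha>.
        \<gamma> (h x) \<alpha> Acc = \<beta> x \<alpha> Acc \<and>
        \<gamma> (h x) \<alpha> Rej = \<beta> x \<alpha> Rej \<and>
        (\<forall>v. \<gamma> (h x) \<alpha> (OutV v) = \<beta> x \<alpha> (OutV v)) \<and>
        (\<forall>p y. \<gamma> (h x) \<alpha> (Tr p y) = mass (\<beta> x \<alpha>) {Tr p x' | x'. x' \<in> X \<and> h x' = y}))"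

primrec deriv :: "('s::{semiring_0,monoid_mult} \<Rightarrow> 's) \<Rightarrow> ('t, 'p, 'v, 's) exp \<Rightarrow> 't set
    \<Rightarrow> ('v, 'p, ('t, 'p, 'v, 's) exp) out \<Rightarrow> 's" where
  "deriv st (Act p) \<alpha> y = (if y = Tr p (Test BOne) then 1 else 0)"
| "deriv st (Test b) \<alpha> y =
     (if beval \<alpha> b then (if y = Acc then 1 else 0) else (if y = Rej then 1 else 0))"
| "deriv st (Ret v) \<alpha> y = (if y = OutV v then 1 else 0)"
| "deriv st (GChoice e b f) \<alpha> y = (if beval \<alpha> b then deriv st e \<alpha> y else deriv st f \<alpha> y)"
| "deriv st (WChoice e r s f) \<alpha> y = r * deriv st e \<alpha> y + s * deriv st f \<alpha> y"
| "deriv st (Seq e f) \<alpha> y =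
     deriv st e \<alpha> Acc * deriv st f \<alpha> y +
     (case y of Acc \<Rightarrow> 0
        | Rej \<Rightarrow> deriv st e \<alpha> Rej
        | OutV v \<Rightarrow> deriv st e \<alpha> (OutV v)
        | Tr p g \<Rightarrow> (case g of Seq e' f' \<Rightarrow> (if f' = f then deriv st e \<alpha> (Tr p e') else 0)
                             | _ \<Rightarrow> 0))"
| "deriv st (Loop e b) \<alpha> y =
     (if beval \<alpha> b then
        (case y of Acc \<Rightarrow> 0
           | Rej \<Rightarrow> st (deriv st e \<alpha> Acc) * deriv st e \<alpha> Rej
           | OutV v \<Rightarrow> st (deriv st e \<alpha> Acc) * deriv st e \<alpha> (OutV v)
           | Tr p g \<Rightarrow> (case g of Seq e' l \<Rightarrow>
                          (if l = Loop e b then st (deriv st e \<alpha> Acc) * deriv st e \<alpha> (Tr p e') else 0)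
                        | _ \<Rightarrow> 0))
      else (if y = Acc then 1 else 0))"

primrec Eps :: "('t, 'p, 'v, 's::{semiring_0,monoid_mult}) exp \<Rightarrow> 't set \<Rightarrow> 's" where
  "Eps (Act p) \<alpha> = 0"
| "Eps (Ret v) \<alpha> = 0"
| "Eps (Test b) \<alpha> = (if beval \<alpha> b then 1 else 0)"
| "Eps (WChoice e r s f) \<alpha> = r * Eps e \<alpha> + s * Eps f \<alpha>"
| "Eps (GChoice e b f) \<alpha> = (if beval \<alpha> b then Eps e \<alpha> else Eps f \<alpha>)"
| "Eps (Seq e f) \<alpha> = Eps e \<alpha> * Eps f \<alpha>"
| "Eps (Loop e b) \<alpha> = (if beval \<alpha> (BNot b) then 1 else 0)"

inductive eqv :: "('s::{semiring_0,monoid_mult} \<Rightarrow> 's) \<Rightarrow> ('t, 'p, 'v, 's) exp \<Rightarrow> ('t, 'p, 'v, 's) exp \<Rightarrow> bool"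
  for st where
  refl: "eqv st e e"
| sym: "eqv st e f \<Longrightarrow> eqv st f e"
| trans: "eqv st e f \<Longrightarrow> eqv st f g \<Longrightarrow> eqv st e g"
| ba_test: "bequiv b c \<Longrightarrow> eqv st (Test b) (Test c)"
| ba_gchoice: "bequiv b c \<Longrightarrow> eqv st (GChoice e b f) (GChoice e c f)"
| ba_loop: "bequiv b c \<Longrightarrow> eqv st (Loop e b) (Loop e c)"
| cong_gchoice: "eqv st e e' \<Longrightarrow> eqv st f f' \<Longrightarrow> eqv st (GChoice e b f) (GChoice e' b f')"
| cong_seq: "eqv st e e' \<Longrightarrow> eqv st f f' \<Longrightarrow> eqv st (Seq e f) (Seq e' f')"
| cong_loop: "eqv st e e' \<Longrightarrow> eqv st (Loop e b) (Loop e' b)"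
| cong_wchoice: "eqv st e e' \<Longrightarrow> eqv st f f' \<Longrightarrow> eqv st (WChoice e r s f) (WChoice e' r s f')"
| G1: "eqv st (GChoice e b e) e"
| G2: "eqv st (GChoice e b f) (GChoice (Seq (Test b) e) b f)"
| G3: "eqv st (GChoice e b f) (GChoice f (BNot b) e)"
| G4: "eqv st (GChoice (GChoice e b f) c g) (GChoice e (BAnd b c) (GChoice f c g))"
| D1: "eqv st (WChoice e r s (GChoice f b g)) (GChoice (WChoice e r s f) b (WChoice e r s g))"
| D2: "eqv st (WChoice e r s (WChoice f t u g)) (WChoice e r 1 (WChoice f (s * t) (s * u) g))"
| D3: "eqv st (Seq (Test b) (WChoice e r s f))
              (Seq (Test b) (WChoice (Seq (Test b) e) r s (Seq (Test b) f)))"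
| S1a: "eqv st (Seq (Test BOne) e) e"
| S1b: "eqv st e (Seq e (Test BOne))"
| S2: "eqv st (Seq (Seq e f) g) (Seq e (Seq f g))"
| S3: "eqv st (Seq (Test BZero) e) (Test BZero)"
| S4: "eqv st (Seq (WChoice e r s f) g) (WChoice (Seq e g) r s (Seq f g))"
| S5: "eqv st (Seq (GChoice e b f) g) (GChoice (Seq e g) b (Seq f g))"
| S6: "eqv st (Seq (Ret v) e) (Ret v)"
| S7: "eqv st (Seq (Test b) (Test c)) (Test (BAnd b c))"
| L1: "eqv st (Loop e b) (GChoice (Seq e (Loop e b)) b (Test BOne))"
| C1: "eqv st (odot 1) (Test BOne)"
| C2: "eqv st (Seq (odot 0) e) (odot 0)"
| W1: "eqv st (WChoice e r s e) (Seq (odot (r + s)) e)"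
| W2: "eqv st (WChoice e r s f) (WChoice f s r e)"
| W3: "eqv st (WChoice e r s (WChoice f t u g)) (WChoice (WChoice e r (s * t) f) 1 (s * u) g)"
| W4: "eqv st (WChoice e (r * u) s f) (WChoice (Seq (odot u) e) r s f)"
| L2: "eqv st e (GChoice (WChoice f r s (Test BOne)) c g) \<Longrightarrow>
       eqv st (Seq (Test c) (Loop e b))
              (Seq (Test c) (GChoice (Seq (odot (st s * r)) (Seq f (Loop e b))) b (Test BOne)))"
| F1: "eqv st g (GChoice (Seq e g) b f) \<Longrightarrow> (\<forall>\<alpha>. Eps e \<alpha> = 0) \<Longrightarrow>
       eqv st g (Seq (Loop e b) f)"

definition eqv_rel :: "('s::{semiring_0,monoid_mult} \<Rightarrow> 's) \<Rightarrow> (('t, 'p, 'v, 's) exp \<times> ('t, 'p, 'v, 's) exp) set" where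
  "eqv_rel st = {(e, f). eqv st e f}"

definition quot :: "('s::{semiring_0,monoid_mult} \<Rightarrow> 's) \<Rightarrow> ('t, 'p, 'v, 's) exp set set" where
  "quot st = UNIV // eqv_rel st"

definition cls :: "('s::{semiring_0,monoid_mult} \<Rightarrow> 's) \<Rightarrow> ('t, 'p, 'v, 's) exp \<Rightarrow> ('t, 'p, 'v, 's) exp set" where
  "cls st e = eqv_rel st `` {e}"

text \<open>An enumeration of a finite set (generalized sums are well defined up to \<equiv>, so any enumeration works).\<close>
definition enum_list :: "'a set \<Rightarrow> 'a list" where
  "enum_list A = (SOME xs. distinct xs \<and> set xs = A)"

definition atom_test :: "'t set \<Rightarrow> 't bexp" where
  "atom_test \<alpha> = foldr (\<lambda>t b. BAnd (if t \<in> \<alpha> then BPrim t else BNot (BPrim t)) b)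
                        (enum_list (UNIV :: 't set)) BOne"

fun gsum :: "'t set list \<Rightarrow> ('t set \<Rightarrow> ('t, 'p, 'v, 's) exp) \<Rightarrow> ('t, 'p, 'v, 's) exp" where
  "gsum [] F = Test BZero"
| "gsum (\<gamma> # \<Phi>) F = GChoice (F \<gamma>) (atom_test \<gamma>) (gsum \<Phi> F)"

fun wsum :: "('s::{zero,one} \<times> ('t, 'p, 'v, 's) exp) list \<Rightarrow> ('t, 'p, 'v, 's) exp" where
  "wsum [] = odot 0"
| "wsum ((r, e) # rest) = WChoice e r 1 (wsum rest)"

text \<open>sys(d) with each formal product p x' replaced by p;h(x')\<close>
primrec sys_h :: "('x \<Rightarrow> ('t, 'p, 'v, 's) exp) \<Rightarrow> ('v, 'p, 'x) out \<Rightarrow> ('t, 'p, 'v, 's) exp" where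
  "sys_h h Rej = Test BZero"
| "sys_h h Acc = Test BOne"
| "sys_h h (OutV v) = Ret v"
| "sys_h h (Tr p x') = Seq (Act p) (h x')"

definition sol_rhs :: "('x \<Rightarrow> 't set \<Rightarrow> ('v, 'p, 'x) out \<Rightarrow> 's::{zero,one})
    \<Rightarrow> ('x \<Rightarrow> ('t, 'p, 'v, 's) exp) \<Rightarrow> 'x \<Rightarrow> ('t, 'p, 'v, 's) exp" where
  "sol_rhs \<beta> h x =
     gsum (enum_list (UNIV :: 't set set))
       (\<lambda>\<alpha>. wsum (map (\<lambda>d. (\<beta> x \<alpha> d, sys_h h d)) (enum_list {d. \<beta> x \<alpha> d \<noteq> 0})))"

definition is_solution :: "('s::{semiring_0,monoid_mult} \<Rightarrow> 's) \<Rightarrow> 'x set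
    \<Rightarrow> ('x \<Rightarrow> 't set \<Rightarrow> ('v, 'p, 'x) out \<Rightarrow> 's) \<Rightarrow> ('x \<Rightarrow> ('t, 'p, 'v, 's) exp) \<Rightarrow> bool" where
  "is_solution st X \<beta> h \<longleftrightarrow> (\<forall>x\<in>X. eqv st (h x) (sol_rhs \<beta> h x))"

definition positive_sr :: "'s::{semiring_0,monoid_mult} itself \<Rightarrow> bool" where
  "positive_sr _ \<longleftrightarrow> (\<forall>x y :: 's. x + y = 0 \<longrightarrow> x = 0 \<and> y = 0)"

definition refinement_sr :: "'s::{semiring_0,monoid_mult} itself \<Rightarrow> bool" where
  "refinement_sr _ \<longleftrightarrow> (\<forall>x y z w :: 's. x + y = z + w \<longrightarrow>
      (\<exists>s t u v. s + t = x \<and> s + u = z \<and> u + v = y \<and> t + v = w))"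

definition conway :: "('s::{semiring_0,monoid_mult} \<Rightarrow> 's) \<Rightarrow> bool" where
  "conway st \<longleftrightarrow> (\<forall>a b. st (a + b) = st a * st (b * st a)) \<and>
                  (\<forall>a b. st (a * b) = 1 + a * st (b * a) * b)"

end

theory Submission
  imports Defs
begin

text \<open>
  Both sides of the equivalence are statements about derivatives pushed forward to equivalence
  classes. As the quotient map is a homomorphism, \<open>dbar\<close> at the class of \<open>e\<close> is the derivative
  of \<open>e\<close> pushed forward along the quotient map. So \<open>cls st \<circ> h\<close> is a homomorphism iff, for every
  \<open>x \<in> X\<close>, the derivative of \<open>h x\<close> and \<open>\<beta> x\<close> have the same pushforward to classes; and the
  derivative of the right-hand side \<open>sol_rhs \<beta> h x\<close> is, modulo \<open>\<equiv>\<close>, \<open>\<beta> x\<close> pushed forward along \<open>h\<close>.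
  What remains is that \<open>e \<equiv> f\<close> iff their derivatives agree modulo \<open>\<equiv>\<close>. One direction is again
  the homomorphism property. For the other, the fundamental theorem writes \<open>e\<close>, below each atom
  \<open>\<alpha>\<close>, as the weighted sum of the \<open>sys(d)\<close> with weights \<open>\<partial>(e)\<^sub>\<alpha>(d)\<close>, and the axioms of weighted
  choice bring a weighted sum into a normal form that only depends on the total weight of each
  equivalence class of summands.
\<close>

section \<open>Pushforward of weight functions\<close>

definition pushforward :: "('a \<Rightarrow> 'b) \<Rightarrow> ('a \<Rightarrow> 's::comm_monoid_add) \<Rightarrow> 'b \<Rightarrow> 's" where
  "pushforward f \<nu> y = mass \<nu> (f -` {y})"

lemma mass_singleton [simp]: "mass \<nu> {a} = \<nu> a"
proof -
  have "{b \<in> {a}. \<nu> b \<noteq> 0} = (if \<nu> a = 0 then {} else {a})"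
    by auto
  then show ?thesis
    by (simp add: mass_def)
qed

lemma mass_cong: "(\<And>a. \<nu> a \<noteq> 0 \<Longrightarrow> a \<in> A \<longleftrightarrow> a \<in> B) \<Longrightarrow> mass \<nu> A = mass \<nu> B"
  unfolding mass_def by (rule arg_cong[where f = "sum \<nu>"]) auto

lemma mass_eq_sum:
  assumes "finite D" and "{a. \<nu> a \<noteq> 0} \<subseteq> D"
  shows "mass \<nu> A = sum \<nu> (A \<inter> D)"
  unfolding mass_def using assms by (intro sum.mono_neutral_left) auto

lemma pushforward_unique_preimage: "f -` {f a} = {a} \<Longrightarrow> pushforward f \<nu> (f a) = \<nu> a"
  by (simp add: pushforward_def)

lemma mass_pushforward:
  assumes fin: "finite {a. \<nu> a \<noteq> 0}"
  shows "mass (pushforward f \<nu>) B = mass \<nu> (f -` B)"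
proof -
  let ?D = "{a. \<nu> a \<noteq> 0}"
  have supp: "{y. pushforward f \<nu> y \<noteq> 0} \<subseteq> f ` ?D"
  proof
    fix y assume "y \<in> {y. pushforward f \<nu> y \<noteq> 0}"
    then have "mass \<nu> (f -` {y}) \<noteq> 0"
      by (simp add: pushforward_def)
    then show "y \<in> f ` ?D"
      unfolding mass_def by (rule contrapos_np) (auto intro!: sum.neutral)
  qed
  have "mass (pushforward f \<nu>) B = (\<Sum>y\<in>B \<inter> f ` ?D. mass \<nu> (f -` {y}))"
    unfolding pushforward_def[symmetric] using fin supp by (intro mass_eq_sum) auto
  also have "\<dots> = (\<Sum>y\<in>B \<inter> f ` ?D. sum \<nu> {a \<in> f -` B \<inter> ?D. f a = y})"
  proof (rule sum.cong)
    fix y assume "y \<in> B \<inter> f ` ?D"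
    then have "{a \<in> f -` B \<inter> ?D. f a = y} = f -` {y} \<inter> ?D"
      by auto
    then show "mass \<nu> (f -` {y}) = sum \<nu> {a \<in> f -` B \<inter> ?D. f a = y}"
      using fin by (simp add: mass_eq_sum[of ?D])
  qed simp
  also have "\<dots> = sum \<nu> (f -` B \<inter> ?D)"
    using fin by (intro sum.group) auto
  also have "\<dots> = mass \<nu> (f -` B)"
    using fin by (simp add: mass_eq_sum[of ?D])
  finally show ?thesis .
qed

lemma pushforward_comp:
  "finite {a. \<nu> a \<noteq> 0} \<Longrightarrow> pushforward (g \<circ> f) \<nu> = pushforward g (pushforward f \<nu>)"
  by (simp add: fun_eq_iff pushforward_def mass_pushforward vimage_comp)

lemma pushforward_factor:
  assumes "finite {a. \<nu> a \<noteq> 0}" and "finite {a. \<mu> a \<noteq> 0}"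
    and "\<And>a b. \<kappa> a = \<kappa> b \<Longrightarrow> g a = g b"
    and "pushforward \<kappa> \<nu> = pushforward \<kappa> \<mu>"
  shows "pushforward g \<nu> = pushforward g \<mu>"
proof -
  define G where "G y = g (SOME a. \<kappa> a = y)" for y
  have "g = G \<circ> \<kappa>"
    unfolding G_def fun_eq_iff comp_def by (metis (mono_tags, lifting) assms(3) someI)
  then show ?thesis
    using assms by (simp add: pushforward_comp)
qed

fun list_weight :: "('s::comm_monoid_add \<times> 'a) list \<Rightarrow> 'a \<Rightarrow> 's" where
  "list_weight [] a = 0"
| "list_weight ((r, b) # L) a = (if b = a then r else 0) + list_weight L a"

lemma list_weight_append [simp]: "list_weight (L @ M) a = list_weight L a + list_weight M a"
  by (induction L a rule: list_weight.induct) (simp_all add: add.assoc)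

lemma list_weight_scale [simp]:
  "list_weight (map (apfst ((*) t)) L) a = (t::'s::semiring_0) * list_weight L a"
  by (induction L a rule: list_weight.induct) (simp_all add: distrib_left)

lemma list_weight_filter:
  "list_weight (filter (\<lambda>(r, b). b \<noteq> c) L) a = (if a = c then 0 else list_weight L a)"
  by (induction L a rule: list_weight.induct) auto

lemma list_weight_nonzero: "list_weight L a \<noteq> 0 \<Longrightarrow> a \<in> snd ` set L"
  by (induction L a rule: list_weight.induct) (auto split: if_splits)

lemma finite_list_weight_support: "finite {a. list_weight L a \<noteq> 0}"
  by (rule finite_subset[of _ "snd ` set L"]) (auto dest: list_weight_nonzero)

lemma list_weight_map_snd_sum:
  "finite D \<Longrightarrow> snd ` set L \<subseteq> D \<Longrightarrow>
     list_weight (map (apsnd f) L) y = sum (list_weight L) (f -` {y} \<inter> D)"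
proof (induction L)
  case (Cons p L)
  obtain r b where p: "p = (r, b)"
    by fastforce
  with Cons.prems have "sum (\<lambda>a. if b = a then r else 0) (f -` {y} \<inter> D) = (if f b = y then r else 0)"
    by simp
  with Cons p show ?case
    by (simp add: sum.distrib)
qed simp

lemma list_weight_map_snd: "list_weight (map (apsnd f) L) = pushforward f (list_weight L)"
proof -
  have supp: "{a. list_weight L a \<noteq> 0} \<subseteq> snd ` set L"
    by (auto dest: list_weight_nonzero)
  show ?thesis
    by (simp add: fun_eq_iff pushforward_def list_weight_map_snd_sum mass_eq_sum[OF _ supp])
qed

lemma list_weight_map_snd_cong:
  "list_weight L = list_weight M \<Longrightarrow> list_weight (map (apsnd f) L) = list_weight (map (apsnd f) M)"
  by (simp add: list_weight_map_snd)

lemma map_apsnd_apfst: "map (apsnd f) (map (apfst g) L) = map (apfst g) (map (apsnd f) L)"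
  by (simp add: apsnd_apfst_commute)

lemma enum_list: "finite A \<Longrightarrow> distinct (enum_list A) \<and> set (enum_list A) = A"
  unfolding enum_list_def by (rule someI_ex) (use finite_distinct_list in blast)

definition weight_list :: "('a \<Rightarrow> 's::zero) \<Rightarrow> ('s \<times> 'a) list" where
  "weight_list \<nu> = map (\<lambda>a. (\<nu> a, a)) (enum_list {a. \<nu> a \<noteq> 0})"

lemma list_weight_map_distinct:
  "distinct xs \<Longrightarrow> list_weight (map (\<lambda>a. (\<nu> a, a)) xs) b = (if b \<in> set xs then \<nu> b else 0)"
  by (induction xs) auto

lemma list_weight_weight_list: "finite {a. \<nu> a \<noteq> 0} \<Longrightarrow> list_weight (weight_list \<nu>) = \<nu>"
  by (auto simp: fun_eq_iff weight_list_def list_weight_map_distinct enum_list)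

lemma pushforward_map_out_Tr:
  assumes "\<And>q x'. \<nu> (Tr q x') \<noteq> 0 \<Longrightarrow> x' \<in> X"
  shows "pushforward (map_out id id h) \<nu> (Tr p y) = mass \<nu> {Tr p x' | x'. x' \<in> X \<and> h x' = y}"
  unfolding pushforward_def
proof (rule mass_cong)
  fix d assume "\<nu> d \<noteq> 0"
  then show "d \<in> map_out id id h -` {Tr p y} \<longleftrightarrow> d \<in> {Tr p x' | x'. x' \<in> X \<and> h x' = y}"
    using assms by (cases d) auto
qed

lemma pushforward_map_out_output:
  assumes "k \<in> {Acc, Rej} \<union> range OutV"
  shows "pushforward (map_out id id h) \<nu> (map_out id id h k) = \<nu> k"
proof (rule pushforward_unique_preimage)
  have "map_out id id h d = map_out id id h k \<longleftrightarrow> d = k" for d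
    using assms by (cases d) auto
  then show "map_out id id h -` {map_out id id h k} = {k}"
    by auto
qed

lemma is_hom_iff_pushforward:
  fixes \<beta> :: "'x \<Rightarrow> 't set \<Rightarrow> ('v, 'p, 'x) out \<Rightarrow> 's::comm_monoid_add"
  assumes "is_aut X \<beta>"
  shows "is_hom X \<beta> Y \<gamma> h \<longleftrightarrow>
    (\<forall>x\<in>X. h x \<in> Y \<and> (\<forall>\<alpha>. \<gamma> (h x) \<alpha> = pushforward (map_out id id h) (\<beta> x \<alpha>)))"
proof -
  have "(\<forall>k. \<gamma> z \<alpha> k = pushforward (map_out id id h) (\<beta> x \<alpha>) k) \<longleftrightarrow>
      \<gamma> z \<alpha> Acc = \<beta> x \<alpha> Acc \<and> \<gamma> z \<alpha> Rej = \<beta> x \<alpha> Rej \<and>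
      (\<forall>v. \<gamma> z \<alpha> (OutV v) = \<beta> x \<alpha> (OutV v)) \<and>
      (\<forall>p y. \<gamma> z \<alpha> (Tr p y) = mass (\<beta> x \<alpha>) {Tr p x' | x'. x' \<in> X \<and> h x' = y})"
    (is "_ \<longleftrightarrow> ?componentwise") if "x \<in> X" for x z \<alpha>
  proof -
    have "pushforward (map_out id id h) (\<beta> x \<alpha>) (Tr p y) =
        mass (\<beta> x \<alpha>) {Tr p x' | x'. x' \<in> X \<and> h x' = y}" for p y
      using assms \<open>x \<in> X\<close> by (intro pushforward_map_out_Tr) (auto simp: is_aut_def)
    note at_outcomes = this
      pushforward_map_out_output[where h = h and \<nu> = "\<beta> x \<alpha>" and k = Acc]
      pushforward_map_out_output[where h = h and \<nu> = "\<beta> x \<alpha>" and k = Rej]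
      pushforward_map_out_output[where h = h and \<nu> = "\<beta> x \<alpha>" and k = "OutV v" for v]
    show ?thesis
    proof
      show ?componentwise if "\<forall>k. \<gamma> z \<alpha> k = pushforward (map_out id id h) (\<beta> x \<alpha>) k"
        using that at_outcomes by simp
      show "\<forall>k. \<gamma> z \<alpha> k = pushforward (map_out id id h) (\<beta> x \<alpha>) k" if ?componentwise
      proof
        fix k
        show "\<gamma> z \<alpha> k = pushforward (map_out id id h) (\<beta> x \<alpha>) k"
          using that at_outcomes by (cases k) simp_all
      qed
    qed
  qed
  then show ?thesis
    unfolding is_hom_def fun_eq_iff by blast
qed

section \<open>Derived laws of the equivalence\<close>

declare eqv.trans [trans]

context
  fixes st :: "'s::{semiring_0,monoid_mult} \<Rightarrow> 's"
begin

abbreviation eqv_st (infix "\<approx>" 50) where "e \<approx> f \<equiv> eqv st e f"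

lemma eqv_Seq_left: "e \<approx> e' \<Longrightarrow> Seq e f \<approx> Seq e' f"
  by (simp add: eqv.cong_seq eqv.refl)

lemma eqv_Seq_right: "f \<approx> f' \<Longrightarrow> Seq e f \<approx> Seq e f'"
  by (simp add: eqv.cong_seq eqv.refl)

lemma eqv_GChoice_left: "e \<approx> e' \<Longrightarrow> GChoice e b f \<approx> GChoice e' b f"
  by (simp add: eqv.cong_gchoice eqv.refl)

lemma eqv_GChoice_right: "f \<approx> f' \<Longrightarrow> GChoice e b f \<approx> GChoice e b f'"
  by (simp add: eqv.cong_gchoice eqv.refl)

lemma eqv_WChoice_left: "e \<approx> e' \<Longrightarrow> WChoice e r s f \<approx> WChoice e' r s f"
  by (simp add: eqv.cong_wchoice eqv.refl)

lemma eqv_WChoice_right: "f \<approx> f' \<Longrightarrow> WChoice e r s f \<approx> WChoice e r s f'"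
  by (simp add: eqv.cong_wchoice eqv.refl)

lemma cls_eq_iff: "cls st e = cls st f \<longleftrightarrow> e \<approx> f"
proof -
  have "equiv UNIV (eqv_rel st)"
    unfolding equiv_def refl_on_def sym_def trans_def eqv_rel_def
    by (auto intro: eqv.refl eqv.sym eqv.trans)
  from eq_equiv_class_iff[OF this UNIV_I UNIV_I] show ?thesis
    unfolding cls_def by (simp add: eqv_rel_def)
qed

lemma cls_in_quot: "cls st e \<in> quot st"
  unfolding cls_def quot_def by (rule quotientI) simp

lemma Seq_Test_cong: "bequiv b c \<Longrightarrow> Seq (Test b) e \<approx> Seq (Test c) e"
  by (simp add: eqv.ba_test eqv_Seq_left)

lemma Seq_Test_Test: "Seq (Test b) (Seq (Test c) e) \<approx> Seq (Test (BAnd b c)) e"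
proof -
  have "Seq (Test b) (Seq (Test c) e) \<approx> Seq (Seq (Test b) (Test c)) e"
    by (rule eqv.sym, rule eqv.S2)
  also have "\<dots> \<approx> Seq (Test (BAnd b c)) e"
    by (rule eqv_Seq_left, rule eqv.S7)
  finally show ?thesis .
qed

lemma Seq_Test_false: "bequiv b BZero \<Longrightarrow> Seq (Test b) e \<approx> Test BZero"
  by (meson eqv.S3 eqv.trans Seq_Test_cong)

lemma GChoice_guard_else: "GChoice e b f \<approx> GChoice e b (Seq (Test (BNot b)) f)"
proof -
  have "GChoice e b f \<approx> GChoice f (BNot b) e"
    by (rule eqv.G3)
  also have "\<dots> \<approx> GChoice (Seq (Test (BNot b)) f) (BNot b) e"
    by (rule eqv.G2)
  also have "\<dots> \<approx> GChoice e (BNot (BNot b)) (Seq (Test (BNot b)) f)"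
    by (rule eqv.G3)
  also have "\<dots> \<approx> GChoice e b (Seq (Test (BNot b)) f)"
    by (rule eqv.ba_gchoice) (simp add: bequiv_def)
  finally show ?thesis .
qed

lemma GChoice_true:
  assumes "bequiv b BOne"
  shows "GChoice e b f \<approx> e"
proof -
  have to_zero: "GChoice e b g \<approx> GChoice e b (Test BZero)" for g
  proof -
    have "GChoice e b g \<approx> GChoice e b (Seq (Test (BNot b)) g)"
      by (rule GChoice_guard_else)
    also have "\<dots> \<approx> GChoice e b (Test BZero)"
      by (rule eqv_GChoice_right, rule Seq_Test_false) (use assms in \<open>simp add: bequiv_def\<close>)
    finally show ?thesis .
  qed
  have "GChoice e b f \<approx> GChoice e b e"
    using to_zero[of f] to_zero[of e] by (rule eqv.trans[OF _ eqv.sym])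
  also have "\<dots> \<approx> e"
    by (rule eqv.G1)
  finally show ?thesis .
qed

lemma Test_eqv_GChoice: "Test b \<approx> GChoice (Test BOne) b (Test BZero)"
proof -
  have "Test b \<approx> GChoice (Test b) b (Test b)"
    by (rule eqv.sym, rule eqv.G1)
  also have "\<dots> \<approx> GChoice (Test b) b (Seq (Test (BNot b)) (Test b))"
    by (rule GChoice_guard_else)
  also have "\<dots> \<approx> GChoice (Test b) b (Test BZero)"
    by (rule eqv_GChoice_right, rule eqv.trans[OF eqv.S7 eqv.ba_test]) (simp add: bequiv_def)
  also have "\<dots> \<approx> GChoice (Seq (Test b) (Test BOne)) b (Test BZero)"
    by (rule eqv_GChoice_left, rule eqv.S1b)
  also have "\<dots> \<approx> GChoice (Test BOne) b (Test BZero)"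
    by (rule eqv.sym, rule eqv.G2)
  finally show ?thesis .
qed

lemma Seq_Test_eqv_GChoice: "Seq (Test b) e \<approx> GChoice e b (Test BZero)"
proof -
  have "Seq (Test b) e \<approx> Seq (GChoice (Test BOne) b (Test BZero)) e"
    by (rule eqv_Seq_left, rule Test_eqv_GChoice)
  also have "\<dots> \<approx> GChoice (Seq (Test BOne) e) b (Seq (Test BZero) e)"
    by (rule eqv.S5)
  also have "\<dots> \<approx> GChoice e b (Test BZero)"
    by (intro eqv.cong_gchoice eqv.S1a eqv.S3)
  finally show ?thesis .
qed

lemma Seq_Test_GChoice_same: "Seq (Test b) (GChoice e b f) \<approx> Seq (Test b) e"
proof -
  have "Seq (Test b) (GChoice e b f) \<approx> GChoice (GChoice e b f) b (Test BZero)"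
    by (rule Seq_Test_eqv_GChoice)
  also have "\<dots> \<approx> GChoice (GChoice f (BNot b) e) b (Test BZero)"
    by (rule eqv_GChoice_left, rule eqv.G3)
  also have "\<dots> \<approx> GChoice f (BAnd (BNot b) b) (GChoice e b (Test BZero))"
    by (rule eqv.G4)
  also have "\<dots> \<approx> GChoice (GChoice e b (Test BZero)) (BNot (BAnd (BNot b) b)) f"
    by (rule eqv.G3)
  also have "\<dots> \<approx> GChoice e b (Test BZero)"
    by (rule GChoice_true) (simp add: bequiv_def)
  also have "\<dots> \<approx> Seq (Test b) e"
    by (rule eqv.sym, rule Seq_Test_eqv_GChoice)
  finally show ?thesis .
qed

lemma Seq_Test_GChoice_pos:
  assumes "\<And>\<sigma>. beval \<sigma> c \<Longrightarrow> beval \<sigma> b"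
  shows "Seq (Test c) (GChoice e b f) \<approx> Seq (Test c) e"
proof -
  have c: "bequiv c (BAnd c b)"
    using assms by (auto simp: bequiv_def)
  have "Seq (Test c) (GChoice e b f) \<approx> Seq (Test (BAnd c b)) (GChoice e b f)"
    by (rule Seq_Test_cong[OF c])
  also have "\<dots> \<approx> Seq (Test c) (Seq (Test b) (GChoice e b f))"
    by (rule eqv.sym, rule Seq_Test_Test)
  also have "\<dots> \<approx> Seq (Test c) (Seq (Test b) e)"
    by (rule eqv_Seq_right, rule Seq_Test_GChoice_same)
  also have "\<dots> \<approx> Seq (Test (BAnd c b)) e"
    by (rule Seq_Test_Test)
  also have "\<dots> \<approx> Seq (Test c) e"
    by (rule eqv.sym, rule Seq_Test_cong[OF c])
  finally show ?thesis .
qed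

lemma Seq_Test_GChoice_neg:
  assumes "\<And>\<sigma>. beval \<sigma> c \<Longrightarrow> \<not> beval \<sigma> b"
  shows "Seq (Test c) (GChoice e b f) \<approx> Seq (Test c) f"
proof -
  have "Seq (Test c) (GChoice e b f) \<approx> Seq (Test c) (GChoice f (BNot b) e)"
    by (rule eqv_Seq_right, rule eqv.G3)
  also have "\<dots> \<approx> Seq (Test c) f"
    by (rule Seq_Test_GChoice_pos) (simp add: assms)
  finally show ?thesis .
qed

lemma Seq_Test_BOr:
  fixes e f :: "('t, 'p, 'v, 's) exp"
  assumes "Seq (Test b) e \<approx> Seq (Test b) f" and "Seq (Test c) e \<approx> Seq (Test c) f"
  shows "Seq (Test (BOr b c)) e \<approx> Seq (Test (BOr b c)) f"
proof -
  have split: "Seq (Test (BOr b c)) g \<approx> GChoice (Seq (Test b) g) b (Seq (Test (BAnd (BNot b) c)) g)"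
    for g :: "('t, 'p, 'v, 's) exp"
  proof -
    let ?bc = "Seq (Test (BOr b c)) g"
    have "?bc \<approx> GChoice ?bc b ?bc"
      by (rule eqv.sym, rule eqv.G1)
    also have "\<dots> \<approx> GChoice (Seq (Test b) ?bc) b ?bc"
      by (rule eqv.G2)
    also have "\<dots> \<approx> GChoice (Seq (Test b) ?bc) b (Seq (Test (BNot b)) ?bc)"
      by (rule GChoice_guard_else)
    also have "\<dots> \<approx> GChoice (Seq (Test (BAnd b (BOr b c))) g) b (Seq (Test (BAnd (BNot b) (BOr b c))) g)"
      by (intro eqv.cong_gchoice Seq_Test_Test)
    also have "\<dots> \<approx> GChoice (Seq (Test b) g) b (Seq (Test (BAnd (BNot b) c)) g)"
      by (intro eqv.cong_gchoice Seq_Test_cong) (auto simp: bequiv_def)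
    finally show ?thesis .
  qed
  have "Seq (Test (BAnd (BNot b) c)) e \<approx> Seq (Test (BNot b)) (Seq (Test c) e)"
    by (rule eqv.sym, rule Seq_Test_Test)
  also have "\<dots> \<approx> Seq (Test (BNot b)) (Seq (Test c) f)"
    by (rule eqv_Seq_right, rule assms(2))
  also have "\<dots> \<approx> Seq (Test (BAnd (BNot b) c)) f"
    by (rule Seq_Test_Test)
  finally have rest: "Seq (Test (BAnd (BNot b) c)) e \<approx> Seq (Test (BAnd (BNot b) c)) f" .
  have "Seq (Test (BOr b c)) e \<approx> GChoice (Seq (Test b) e) b (Seq (Test (BAnd (BNot b) c)) e)"
    by (rule split)
  also have "\<dots> \<approx> GChoice (Seq (Test b) f) b (Seq (Test (BAnd (BNot b) c)) f)"
    by (rule eqv.cong_gchoice[OF assms(1) rest])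
  also have "\<dots> \<approx> Seq (Test (BOr b c)) f"
    by (rule eqv.sym, rule split)
  finally show ?thesis .
qed

lemma eqv_GChoice_by_guard:
  assumes "Seq (Test c) e \<approx> Seq (Test c) e'"
  shows "e \<approx> GChoice e' c e"
proof -
  have "e \<approx> GChoice e c e"
    by (rule eqv.sym, rule eqv.G1)
  also have "\<dots> \<approx> GChoice (Seq (Test c) e) c e"
    by (rule eqv.G2)
  also have "\<dots> \<approx> GChoice (Seq (Test c) e') c e"
    by (rule eqv_GChoice_left, rule assms)
  also have "\<dots> \<approx> GChoice e' c e"
    by (rule eqv.sym, rule eqv.G2)
  finally show ?thesis .
qed

section \<open>Weighted sums\<close>

lemma odot_Seq: "Seq (odot t) e \<approx> WChoice e t 0 (Test BZero)"
proof -
  have "Seq (odot t) e \<approx> WChoice (Seq (Test BOne) e) t 0 (Seq (Test BZero) e)"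
    unfolding odot_def by (rule eqv.S4)
  also have "\<dots> \<approx> WChoice e t 0 (Test BZero)"
    by (intro eqv.cong_wchoice eqv.S1a eqv.S3)
  finally show ?thesis .
qed

lemma odot_one_Seq: "Seq (odot 1) e \<approx> e"
  by (meson eqv.C1 eqv.S1a eqv.trans eqv_Seq_left)

lemma WChoice_one_zero: "e \<approx> WChoice e 1 0 (Test BZero)"
  by (meson odot_one_Seq odot_Seq eqv.sym eqv.trans)

lemma WChoice_zero_weight_odot: "WChoice e 0 s g \<approx> WChoice (odot 0) 1 s g"
proof -
  have "WChoice e (1 * 0) s g \<approx> WChoice (Seq (odot 0) e) 1 s g"
    by (rule eqv.W4)
  also have "\<dots> \<approx> WChoice (odot 0) 1 s g"
    by (rule eqv_WChoice_left, rule eqv.C2)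
  finally show ?thesis
    by simp
qed

lemma WChoice_zero_weight: "WChoice e 0 s g \<approx> WChoice e' 0 s g"
  using WChoice_zero_weight_odot[of e] WChoice_zero_weight_odot[of e'] by (rule eqv.trans[OF _ eqv.sym])

lemma WChoice_zero_weight_right: "WChoice e r 0 f \<approx> WChoice e r 0 f'"
  by (meson WChoice_zero_weight eqv.W2 eqv.sym eqv.trans)

lemma WChoice_unit_left: "WChoice e 1 0 f \<approx> e"
  by (meson WChoice_zero_weight_right WChoice_one_zero eqv.sym eqv.trans)

lemma WChoice_unit_right: "WChoice f 0 1 e \<approx> e"
  by (meson WChoice_unit_left eqv.W2 eqv.trans)

lemma WChoice_odot_zero: "WChoice e r s (odot 0) \<approx> WChoice e r 1 (odot 0)"
  using eqv.D2[of st e r s "Test BOne" 0 0 "Test BZero"] by (simp add: odot_def)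

lemma wsum_singleton: "wsum [(r, e)] \<approx> Seq (odot r) e"
proof -
  have "wsum [(r, e)] \<approx> WChoice e r 0 (odot 0)"
    by simp (rule eqv.sym, rule WChoice_odot_zero)
  also have "\<dots> \<approx> WChoice e r 0 (Test BZero)"
    by (rule WChoice_zero_weight_right)
  also have "\<dots> \<approx> Seq (odot r) e"
    by (rule eqv.sym, rule odot_Seq)
  finally show ?thesis .
qed

lemma wsum_singleton_one: "wsum [(1, e)] \<approx> e"
  by (meson eqv.trans odot_one_Seq wsum_singleton)

lemma WChoice_right_weight: "WChoice e r s f \<approx> WChoice e r 1 (Seq (odot s) f)"
proof -
  have "WChoice e r s f \<approx> WChoice e r s (WChoice f 1 0 (Test BZero))"
    by (rule eqv_WChoice_right, rule WChoice_one_zero)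
  also have "\<dots> \<approx> WChoice e r 1 (WChoice f (s * 1) (s * 0) (Test BZero))"
    by (rule eqv.D2)
  also have "\<dots> \<approx> WChoice e r 1 (Seq (odot s) f)"
    by simp (rule eqv_WChoice_right, rule eqv.sym, rule odot_Seq)
  finally show ?thesis .
qed

lemma WChoice_swap: "WChoice e r 1 (WChoice f t 1 g) \<approx> WChoice f t 1 (WChoice e r 1 g)"
proof -
  have "WChoice e r 1 (WChoice f t 1 g) \<approx> WChoice (WChoice e r (1 * t) f) 1 (1 * 1) g"
    by (rule eqv.W3)
  also have "\<dots> \<approx> WChoice (WChoice f t (1 * r) e) 1 (1 * 1) g"
    by simp (rule eqv_WChoice_left, rule eqv.W2)
  also have "\<dots> \<approx> WChoice f t 1 (WChoice e r 1 g)"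
    by (rule eqv.sym, rule eqv.W3)
  finally show ?thesis .
qed

lemma WChoice_merge: "WChoice e r 1 (WChoice e s 1 g) \<approx> WChoice e (r + s) 1 g"
proof -
  have "WChoice e r 1 (WChoice e s 1 g) \<approx> WChoice (WChoice e r (1 * s) e) 1 (1 * 1) g"
    by (rule eqv.W3)
  also have "\<dots> \<approx> WChoice (Seq (odot (r + s)) e) 1 1 g"
    by simp (rule eqv_WChoice_left, rule eqv.W1)
  also have "\<dots> \<approx> WChoice e (1 * (r + s)) 1 g"
    by (rule eqv.sym, rule eqv.W4)
  finally show ?thesis
    by simp
qed

lemma odot_Seq_wsum: "Seq (odot t) (wsum M) \<approx> wsum (map (apfst ((*) t)) M)"
proof (induction M)
  case Nil
  have "Seq (odot t) (odot 0) \<approx> WChoice (odot 0) t 0 (Test BZero)"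
    by (rule odot_Seq)
  also have "\<dots> \<approx> WChoice (Test BZero) 0 t (odot 0)"
    by (rule eqv.W2)
  also have "\<dots> \<approx> WChoice (Test BZero) 0 1 (odot 0)"
    by (rule WChoice_odot_zero)
  also have "\<dots> \<approx> odot 0"
    by (rule WChoice_unit_right)
  finally show ?case
    by simp
next
  case (Cons a M)
  obtain r e where a: "a = (r, e)"
    by fastforce
  have "Seq (odot t) (WChoice e r 1 (wsum M)) \<approx> WChoice (WChoice e r 1 (wsum M)) t 0 (Test BZero)"
    by (rule odot_Seq)
  also have "\<dots> \<approx> WChoice (Test BZero) 0 t (WChoice e r 1 (wsum M))"
    by (rule eqv.W2)
  also have "\<dots> \<approx> WChoice (Test BZero) 0 1 (WChoice e (t * r) (t * 1) (wsum M))"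
    by (rule eqv.D2)
  also have "\<dots> \<approx> WChoice e (t * r) t (wsum M)"
    by simp (rule WChoice_unit_right)
  also have "\<dots> \<approx> WChoice e (t * r) 1 (Seq (odot t) (wsum M))"
    by (rule WChoice_right_weight)
  also have "\<dots> \<approx> WChoice e (t * r) 1 (wsum (map (apfst ((*) t)) M))"
    by (rule eqv_WChoice_right, rule Cons.IH)
  finally show ?case
    by (simp add: a)
qed

lemma wsum_append: "wsum (M @ N) \<approx> WChoice (wsum M) 1 1 (wsum N)"
proof (induction M)
  case Nil
  show ?case
    by simp (meson WChoice_zero_weight_odot WChoice_unit_right eqv.sym eqv.trans)
next
  case (Cons a M)
  obtain r e where a: "a = (r, e)"
    by fastforce
  have "WChoice e r 1 (wsum (M @ N)) \<approx> WChoice e r 1 (WChoice (wsum M) 1 1 (wsum N))"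
    by (rule eqv_WChoice_right, rule Cons.IH)
  also have "\<dots> \<approx> WChoice (WChoice e r (1 * 1) (wsum M)) 1 (1 * 1) (wsum N)"
    by (rule eqv.W3)
  finally show ?case
    by (simp add: a)
qed

lemma wsum_Cons_wsum: "wsum ((r, wsum M) # N) \<approx> wsum (map (apfst ((*) r)) M @ N)"
proof -
  have "WChoice (wsum M) (1 * r) 1 (wsum N) \<approx> WChoice (Seq (odot r) (wsum M)) 1 1 (wsum N)"
    by (rule eqv.W4)
  also have "\<dots> \<approx> WChoice (wsum (map (apfst ((*) r)) M)) 1 1 (wsum N)"
    by (rule eqv_WChoice_left, rule odot_Seq_wsum)
  also have "\<dots> \<approx> wsum (map (apfst ((*) r)) M @ N)"
    by (rule eqv.sym, rule wsum_append)
  finally show ?thesis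
    by simp
qed

lemma WChoice_wsum:
  "WChoice (wsum M) r s (wsum N) \<approx> wsum (map (apfst ((*) r)) M @ map (apfst ((*) s)) N)"
proof -
  have "WChoice (wsum M) r s (wsum N) \<approx> WChoice (wsum M) r 1 (Seq (odot s) (wsum N))"
    by (rule WChoice_right_weight)
  also have "\<dots> \<approx> wsum ((r, wsum M) # map (apfst ((*) s)) N)"
    by simp (rule eqv_WChoice_right, rule odot_Seq_wsum)
  also have "\<dots> \<approx> wsum (map (apfst ((*) r)) M @ map (apfst ((*) s)) N)"
    by (rule wsum_Cons_wsum)
  finally show ?thesis .
qed

lemma wsum_Seq: "Seq (wsum M) f \<approx> wsum (map (apsnd (\<lambda>e. Seq e f)) M)"
proof (induction M)
  case Nil
  then show ?case
    by simp (rule eqv.C2)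
next
  case (Cons a M)
  obtain r e where a: "a = (r, e)"
    by fastforce
  have "Seq (WChoice e r 1 (wsum M)) f \<approx> WChoice (Seq e f) r 1 (Seq (wsum M) f)"
    by (rule eqv.S4)
  also have "\<dots> \<approx> WChoice (Seq e f) r 1 (wsum (map (apsnd (\<lambda>e. Seq e f)) M))"
    by (rule eqv_WChoice_right, rule Cons.IH)
  finally show ?case
    by (simp add: a)
qed

lemma wsum_map_cong:
  "(\<And>r a. (r, a) \<in> set L \<Longrightarrow> f a \<approx> g a) \<Longrightarrow> wsum (map (apsnd f) L) \<approx> wsum (map (apsnd g) L)"
proof (induction L)
  case Nil
  then show ?case
    by (simp add: eqv.refl)
next
  case (Cons a L)
  obtain r b where a: "a = (r, b)"
    by fastforce
  with Cons have "f b \<approx> g b" and "wsum (map (apsnd f) L) \<approx> wsum (map (apsnd g) L)"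
    by auto
  with a show ?case
    by (simp add: eqv.cong_wchoice)
qed

lemma wsum_zero_weights: "wsum (map (\<lambda>e. (0, e)) D) \<approx> odot 0"
  by (induction D) (simp_all add: eqv.refl, meson WChoice_unit_right eqv.trans)

lemma wsum_add_weight:
  assumes "distinct D" and "e \<in> set D"
  shows "WChoice e r 1 (wsum (map (\<lambda>e'. (w e', e')) D))
           \<approx> wsum (map (\<lambda>e'. ((if e' = e then r else 0) + w e', e')) D)"
  using assms
proof (induction D)
  case (Cons e0 D)
  let ?rest = "wsum (map (\<lambda>e'. (w e', e')) D)"
  show ?case
  proof (cases "e0 = e")
    case True
    with Cons.prems have "map (\<lambda>e'. ((if e' = e then r else 0) + w e', e')) D = map (\<lambda>e'. (w e', e')) D"
      by (auto intro!: map_cong)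
    with True show ?thesis
      using WChoice_merge[of e r "w e" ?rest] by (simp del: map_eq_conv)
  next
    case False
    have "WChoice e r 1 (WChoice e0 (w e0) 1 ?rest) \<approx> WChoice e0 (w e0) 1 (WChoice e r 1 ?rest)"
      by (rule WChoice_swap)
    also have "\<dots> \<approx> WChoice e0 (w e0) 1 (wsum (map (\<lambda>e'. ((if e' = e then r else 0) + w e', e')) D))"
      using Cons False by (intro eqv_WChoice_right) auto
    finally show ?thesis
      using False by simp
  qed
qed simp

lemma wsum_collect:
  "distinct D \<Longrightarrow> snd ` set M \<subseteq> set D \<Longrightarrow> wsum M \<approx> wsum (map (\<lambda>e. (list_weight M e, e)) D)"
proof (induction M)
  case Nil
  then show ?case
    by simp (rule eqv.sym, rule wsum_zero_weights)
next
  case (Cons a M)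
  obtain r e where a: "a = (r, e)"
    by fastforce
  have "WChoice e r 1 (wsum M) \<approx> WChoice e r 1 (wsum (map (\<lambda>e. (list_weight M e, e)) D))"
    using Cons a by (intro eqv_WChoice_right) auto
  also have "\<dots> \<approx> wsum (map (\<lambda>e'. ((if e' = e then r else 0) + list_weight M e', e')) D)"
    using Cons a by (intro wsum_add_weight) auto
  finally show ?case
    using a by (simp add: eq_commute)
qed

lemma wsum_eqv_if_list_weight_eq: "list_weight M = list_weight N \<Longrightarrow> wsum M \<approx> wsum N"
proof -
  assume weights: "list_weight M = list_weight N"
  let ?D = "remdups (map snd (M @ N))"
  have "wsum M \<approx> wsum (map (\<lambda>e. (list_weight M e, e)) ?D)"
    by (rule wsum_collect) auto
  also have "\<dots> \<approx> wsum N"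
    unfolding weights by (rule eqv.sym, rule wsum_collect) auto
  finally show ?thesis .
qed

lemma wsum_eqv_if_class_weight_eq:
  fixes M N :: "('s \<times> ('t, 'p, 'v, 's) exp) list"
  assumes "list_weight (map (apsnd (cls st)) M) = list_weight (map (apsnd (cls st)) N)"
  shows "wsum M \<approx> wsum N"
proof -
  define rep :: "('t, 'p, 'v, 's) exp set \<Rightarrow> ('t, 'p, 'v, 's) exp"
    where "rep c = (SOME e. cls st e = c)" for c
  have rep: "e \<approx> rep (cls st e)" for e
    unfolding rep_def by (metis (mono_tags, lifting) cls_eq_iff someI)
  have to_rep: "wsum L \<approx> wsum (map (apsnd (rep \<circ> cls st)) L)" for L
    using wsum_map_cong[of L id "rep \<circ> cls st"] rep by simp
  have "list_weight (map (apsnd (rep \<circ> cls st)) M) = list_weight (map (apsnd (rep \<circ> cls st)) N)"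
    using list_weight_map_snd_cong[OF assms, of rep] by (simp add: apsnd_def map_prod.comp)
  then have "wsum (map (apsnd (rep \<circ> cls st)) M) \<approx> wsum (map (apsnd (rep \<circ> cls st)) N)"
    by (rule wsum_eqv_if_list_weight_eq)
  then show ?thesis
    by (meson to_rep eqv.sym eqv.trans)
qed

section \<open>Atoms and the fundamental theorem\<close>

lemma atom_test_iff: "beval \<sigma> (atom_test (\<alpha>::'t::finite set)) \<longleftrightarrow> \<sigma> = \<alpha>"
proof -
  have "beval \<sigma> (foldr (\<lambda>t b. BAnd (if t \<in> \<alpha> then BPrim t else BNot (BPrim t)) b) ts BOne)
      \<longleftrightarrow> (\<forall>t\<in>set ts. t \<in> \<sigma> \<longleftrightarrow> t \<in> \<alpha>)" for ts
    by (induction ts) auto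
  moreover have "set (enum_list (UNIV :: 't set)) = UNIV"
    by (simp add: enum_list)
  ultimately show ?thesis
    unfolding atom_test_def by auto
qed

abbreviation on_atom :: "'t set \<Rightarrow> ('t, 'p, 'v, 's) exp \<Rightarrow> ('t, 'p, 'v, 's) exp" where
  "on_atom \<alpha> e \<equiv> Seq (Test (atom_test \<alpha>)) e"

lemma on_atom_GChoice_pos: "beval \<alpha> b \<Longrightarrow> on_atom (\<alpha>::'t::finite set) (GChoice e b f) \<approx> on_atom \<alpha> e"
  by (rule Seq_Test_GChoice_pos) (simp add: atom_test_iff)

lemma on_atom_GChoice_neg: "\<not> beval \<alpha> b \<Longrightarrow> on_atom (\<alpha>::'t::finite set) (GChoice e b f) \<approx> on_atom \<alpha> f"
  by (rule Seq_Test_GChoice_neg) (simp add: atom_test_iff)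

lemma on_atom_Test:
  "on_atom (\<alpha>::'t::finite set) (Test b) \<approx> on_atom \<alpha> (Test (if beval \<alpha> b then BOne else BZero))"
proof -
  have "on_atom \<alpha> (Test b) \<approx> Test (BAnd (atom_test \<alpha>) b)"
    by (rule eqv.S7)
  also have "\<dots> \<approx> Test (BAnd (atom_test \<alpha>) (if beval \<alpha> b then BOne else BZero))"
    by (rule eqv.ba_test) (auto simp: bequiv_def atom_test_iff)
  also have "\<dots> \<approx> on_atom \<alpha> (Test (if beval \<alpha> b then BOne else BZero))"
    by (rule eqv.sym, rule eqv.S7)
  finally show ?thesis .
qed

lemma on_atom_WChoice_cong:
  "on_atom \<alpha> e \<approx> on_atom \<alpha> e' \<Longrightarrow> on_atom \<alpha> f \<approx> on_atom \<alpha> f' \<Longrightarrow>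
     on_atom \<alpha> (WChoice e r s f) \<approx> on_atom \<alpha> (WChoice e' r s f')"
  by (meson eqv.D3 eqv.sym eqv.trans eqv_Seq_right eqv_WChoice_left eqv_WChoice_right)

lemma on_atom_Seq_cong: "on_atom \<alpha> e \<approx> on_atom \<alpha> e' \<Longrightarrow> on_atom \<alpha> (Seq e f) \<approx> on_atom \<alpha> (Seq e' f)"
  by (meson eqv.S2 eqv.sym eqv.trans eqv_Seq_left)

lemma eqv_if_on_atoms_eqv:
  fixes e f :: "('t::finite, 'p, 'v, 's) exp"
  assumes "\<And>\<alpha>. on_atom \<alpha> e \<approx> on_atom \<alpha> f"
  shows "e \<approx> f"
proof -
  let ?disj = "\<lambda>\<Phi>. foldr (\<lambda>\<alpha> b. BOr (atom_test \<alpha>) b) \<Phi> BZero"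
  have "Seq (Test (?disj \<Phi>)) e \<approx> Seq (Test (?disj \<Phi>)) f" for \<Phi>
  proof (induction \<Phi>)
    case Nil
    then show ?case
      by simp (meson eqv.S3 eqv.sym eqv.trans)
  next
    case (Cons \<alpha> \<Phi>)
    then show ?case
      by simp (rule Seq_Test_BOr[OF assms])
  qed
  moreover have "bequiv (?disj (enum_list (UNIV :: 't set set))) BOne"
  proof -
    have disj_iff: "beval \<sigma> (?disj \<Phi>) \<longleftrightarrow> \<sigma> \<in> set \<Phi>" for \<sigma> :: "'t set" and \<Phi>
      by (induction \<Phi>) (auto simp: atom_test_iff)
    then show ?thesis
      using enum_list[of "UNIV :: 't set set"] by (simp add: bequiv_def)
  qed
  ultimately show ?thesis
    by (meson Seq_Test_cong eqv.S1a eqv.sym eqv.trans)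
qed

abbreviation sys :: "('v, 'p, ('t, 'p, 'v, 's) exp) out \<Rightarrow> ('t, 'p, 'v, 's) exp" where
  "sys \<equiv> sys_h id"

abbreviation seq_out ::
  "('t, 'p, 'v, 's) exp \<Rightarrow> ('v, 'p, ('t, 'p, 'v, 's) exp) out \<Rightarrow> ('v, 'p, ('t, 'p, 'v, 's) exp) out"
  where "seq_out f \<equiv> map_out id id (\<lambda>g. Seq g f)"

lemma sys_Seq: "d \<noteq> Acc \<Longrightarrow> Seq (sys d) f \<approx> sys (seq_out f d)"
  by (cases d) (auto intro: eqv.S3 eqv.S6 eqv.S2)

lemma wsum_sys_Seq:
  assumes "Acc \<notin> snd ` set L"
  shows "Seq (wsum (map (apsnd sys) L)) f \<approx> wsum (map (apsnd sys) (map (apsnd (seq_out f)) L))"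
proof -
  have "Seq (wsum (map (apsnd sys) L)) f \<approx> wsum (map (apsnd (\<lambda>e. Seq e f)) (map (apsnd sys) L))"
    by (rule wsum_Seq)
  also have "\<dots> = wsum (map (apsnd (\<lambda>d. Seq (sys d) f)) L)"
    by (simp add: apsnd_compose comp_def)
  also have "\<dots> \<approx> wsum (map (apsnd (sys \<circ> seq_out f)) L)"
    using assms by (intro wsum_map_cong) (auto intro: sys_Seq simp: rev_image_eqI)
  also have "\<dots> = wsum (map (apsnd sys) (map (apsnd (seq_out f)) L))"
    by (simp add: apsnd_compose comp_def)
  finally show ?thesis .
qed

lemma wsum_sys_split_Acc:
  "wsum (map (apsnd sys) L) \<approx>
     WChoice (Test BOne) (list_weight L Acc) 1 (wsum (map (apsnd sys) (filter (\<lambda>(r, d). d \<noteq> Acc) L)))"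
proof -
  have "list_weight L = list_weight ((list_weight L Acc, Acc) # filter (\<lambda>(r, d). d \<noteq> Acc) L)"
    by (auto simp: fun_eq_iff list_weight_filter)
  then have "wsum (map (apsnd sys) L) \<approx> wsum (map (apsnd sys) ((list_weight L Acc, Acc) # filter (\<lambda>(r, d). d \<noteq> Acc) L))"
    by (intro wsum_eqv_if_list_weight_eq list_weight_map_snd_cong)
  then show ?thesis
    by simp
qed

lemma list_weight_seq_out:
  "list_weight (map (apsnd (seq_out f)) L) y =
    (case y of Acc \<Rightarrow> list_weight L Acc | Rej \<Rightarrow> list_weight L Rej | OutV v \<Rightarrow> list_weight L (OutV v)
     | Tr p g \<Rightarrow> (case g of Seq e' f' \<Rightarrow> if f' = f then list_weight L (Tr p e') else 0 | _ \<Rightarrow> 0))"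
proof (induction L)
  case Nil
  then show ?case
    by (auto split: out.split exp.split)
next
  case (Cons a L)
  obtain r d where a: "a = (r, d)"
    by fastforce
  show ?case
    using Cons unfolding a by (cases d; cases y) (auto split: out.split exp.split)
qed

text \<open>The fundamental theorem of the paper, localised at one atom.\<close>

definition has_expansion :: "'t::finite set \<Rightarrow> ('t, 'p, 'v, 's) exp \<Rightarrow> bool" where
  "has_expansion \<alpha> e \<longleftrightarrow>
     (\<exists>L. on_atom \<alpha> e \<approx> on_atom \<alpha> (wsum (map (apsnd sys) L)) \<and> list_weight L = deriv st e \<alpha>)"

lemma has_expansionI:
  "on_atom \<alpha> e \<approx> on_atom \<alpha> (wsum (map (apsnd sys) L)) \<Longrightarrow> list_weight L = deriv st e \<alpha> \<Longrightarrow>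
     has_expansion \<alpha> e"
  unfolding has_expansion_def by blast

lemma has_expansionE:
  assumes "has_expansion \<alpha> e"
  obtains L where "on_atom \<alpha> e \<approx> on_atom \<alpha> (wsum (map (apsnd sys) L))"
    and "list_weight L = deriv st e \<alpha>"
  using assms unfolding has_expansion_def by blast

lemma has_expansion_single:
  assumes "on_atom \<alpha> e \<approx> on_atom \<alpha> (sys d)" and "\<And>y. deriv st e \<alpha> y = (if y = d then 1 else 0)"
  shows "has_expansion \<alpha> e"
proof (rule has_expansionI)
  show "on_atom \<alpha> e \<approx> on_atom \<alpha> (wsum (map (apsnd sys) [(1, d)]))"
    using assms(1) wsum_singleton_one[of "sys d"] by simp (meson eqv_Seq_right eqv.sym eqv.trans)
  show "list_weight [(1, d)] = deriv st e \<alpha>"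
    using assms(2) by (auto simp: fun_eq_iff)
qed

lemma has_expansion_Act: "has_expansion \<alpha> (Act p)"
  by (rule has_expansion_single[where d = "Tr p (Test BOne)"]) (auto intro: eqv_Seq_right eqv.S1b)

lemma has_expansion_Ret: "has_expansion \<alpha> (Ret v)"
  by (rule has_expansion_single[where d = "OutV v"]) (auto intro: eqv.refl)

lemma has_expansion_Test: "has_expansion \<alpha> (Test b)"
  by (rule has_expansion_single[where d = "if beval \<alpha> b then Acc else Rej"])
    (use on_atom_Test[of \<alpha> b] in auto)

lemma has_expansion_GChoice:
  assumes "has_expansion \<alpha> e" and "has_expansion \<alpha> f"
  shows "has_expansion \<alpha> (GChoice e b f)"
proof -
  let ?branch = "if beval \<alpha> b then e else f"
  obtain L where L: "on_atom \<alpha> ?branch \<approx> on_atom \<alpha> (wsum (map (apsnd sys) L))"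
    "list_weight L = deriv st ?branch \<alpha>"
    using assms by (cases "beval \<alpha> b") (auto elim: has_expansionE)
  have "on_atom \<alpha> (GChoice e b f) \<approx> on_atom \<alpha> ?branch"
    by (simp add: on_atom_GChoice_pos on_atom_GChoice_neg)
  moreover have "deriv st ?branch \<alpha> = deriv st (GChoice e b f) \<alpha>"
    by (simp add: fun_eq_iff)
  ultimately show ?thesis
    using L by (auto intro: has_expansionI eqv.trans)
qed

lemma has_expansion_WChoice:
  assumes "has_expansion \<alpha> e" and "has_expansion \<alpha> f"
  shows "has_expansion \<alpha> (WChoice e r s f)"
proof -
  obtain Le where Le: "on_atom \<alpha> e \<approx> on_atom \<alpha> (wsum (map (apsnd sys) Le))"
    "list_weight Le = deriv st e \<alpha>"
    using assms(1) by (rule has_expansionE)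
  obtain Lf where Lf: "on_atom \<alpha> f \<approx> on_atom \<alpha> (wsum (map (apsnd sys) Lf))"
    "list_weight Lf = deriv st f \<alpha>"
    using assms(2) by (rule has_expansionE)
  let ?L = "map (apfst ((*) r)) Le @ map (apfst ((*) s)) Lf"
  have "on_atom \<alpha> (WChoice e r s f) \<approx>
      on_atom \<alpha> (WChoice (wsum (map (apsnd sys) Le)) r s (wsum (map (apsnd sys) Lf)))"
    by (rule on_atom_WChoice_cong[OF Le(1) Lf(1)])
  also have "\<dots> \<approx> on_atom \<alpha> (wsum (map (apsnd sys) ?L))"
    using WChoice_wsum[of "map (apsnd sys) Le" r s "map (apsnd sys) Lf"]
    by (simp only: map_append map_apsnd_apfst eqv_Seq_right)
  finally show ?thesis
    by (rule has_expansionI) (auto simp: fun_eq_iff Le(2) Lf(2))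
qed

lemma deriv_Seq_eq_list_weight:
  assumes "list_weight Le = deriv st e \<alpha>" and "list_weight Lf = deriv st f \<alpha>"
  shows "deriv st (Seq e f) \<alpha> = list_weight (map (apfst ((*) (list_weight Le Acc))) Lf
                                  @ map (apsnd (seq_out f)) (filter (\<lambda>(r, d). d \<noteq> Acc) Le))"
proof
  fix y
  show "deriv st (Seq e f) \<alpha> y = list_weight (map (apfst ((*) (list_weight Le Acc))) Lf
      @ map (apsnd (seq_out f)) (filter (\<lambda>(r, d). d \<noteq> Acc) Le)) y"
    unfolding list_weight_append list_weight_scale list_weight_seq_out list_weight_filter assms
    by (auto split: out.split exp.split simp: add.commute)
qed

lemma deriv_Loop_eq_list_weight:
  assumes "list_weight Le = deriv st e \<alpha>" and "beval \<alpha> b"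
  shows "deriv st (Loop e b) \<alpha> = list_weight (map (apfst ((*) (st (list_weight Le Acc))))
                                   (map (apsnd (seq_out (Loop e b))) (filter (\<lambda>(r, d). d \<noteq> Acc) Le)))"
proof
  fix y
  show "deriv st (Loop e b) \<alpha> y = list_weight (map (apfst ((*) (st (list_weight Le Acc))))
      (map (apsnd (seq_out (Loop e b))) (filter (\<lambda>(r, d). d \<noteq> Acc) Le))) y"
    unfolding list_weight_scale list_weight_seq_out list_weight_filter assms(1)
    using assms(2) by (auto split: out.split exp.split)
qed

text \<open>The form of the premise of rule L2, with the accepting part of an expansion as its weighted \<open>\<one>\<close>.\<close>

lemma eqv_GChoice_expansion:
  assumes "on_atom \<alpha> e \<approx> on_atom \<alpha> (wsum (map (apsnd sys) L))"
  shows "e \<approx> GChoice (WChoice (wsum (map (apsnd sys) (filter (\<lambda>(r, d). d \<noteq> Acc) L))) 1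
                  (list_weight L Acc) (Test BOne)) (atom_test \<alpha>) e"
proof (rule eqv_GChoice_by_guard)
  let ?rest = "wsum (map (apsnd sys) (filter (\<lambda>(r, d). d \<noteq> Acc) L))"
  have "on_atom \<alpha> e \<approx> on_atom \<alpha> (WChoice (Test BOne) (list_weight L Acc) 1 ?rest)"
    using assms wsum_sys_split_Acc by (rule eqv.trans[OF _ eqv_Seq_right])
  also have "\<dots> \<approx> on_atom \<alpha> (WChoice ?rest 1 (list_weight L Acc) (Test BOne))"
    by (rule eqv_Seq_right, rule eqv.W2)
  finally show "on_atom \<alpha> e \<approx> on_atom \<alpha> (WChoice ?rest 1 (list_weight L Acc) (Test BOne))" .
qed

lemma has_expansion_Seq:
  assumes "has_expansion \<alpha> e" and "has_expansion \<alpha> f"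
  shows "has_expansion \<alpha> (Seq e f)"
proof -
  obtain Le where Le: "on_atom \<alpha> e \<approx> on_atom \<alpha> (wsum (map (apsnd sys) Le))"
    "list_weight Le = deriv st e \<alpha>"
    using assms(1) by (rule has_expansionE)
  obtain Lf where Lf: "on_atom \<alpha> f \<approx> on_atom \<alpha> (wsum (map (apsnd sys) Lf))"
    "list_weight Lf = deriv st f \<alpha>"
    using assms(2) by (rule has_expansionE)
  let ?W = "\<lambda>L. wsum (map (apsnd sys) L)"
  let ?a = "list_weight Le Acc"
  let ?L' = "filter (\<lambda>(r, d). d \<noteq> Acc) Le"
  have "on_atom \<alpha> (Seq e f) \<approx> on_atom \<alpha> (Seq (?W Le) f)"
    by (rule on_atom_Seq_cong[OF Le(1)])
  also have "\<dots> \<approx> on_atom \<alpha> (Seq (WChoice (Test BOne) ?a 1 (?W ?L')) f)"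
    by (intro eqv_Seq_right eqv_Seq_left wsum_sys_split_Acc)
  also have "\<dots> \<approx> on_atom \<alpha> (WChoice (Seq (Test BOne) f) ?a 1 (Seq (?W ?L') f))"
    by (intro eqv_Seq_right eqv.S4)
  also have "\<dots> \<approx> on_atom \<alpha> (WChoice (?W Lf) ?a 1 (?W (map (apsnd (seq_out f)) ?L')))"
  proof (rule on_atom_WChoice_cong)
    show "on_atom \<alpha> (Seq (Test BOne) f) \<approx> on_atom \<alpha> (?W Lf)"
      using eqv.trans[OF eqv_Seq_right[OF eqv.S1a] Lf(1)] .
    show "on_atom \<alpha> (Seq (?W ?L') f) \<approx> on_atom \<alpha> (?W (map (apsnd (seq_out f)) ?L'))"
      by (intro eqv_Seq_right wsum_sys_Seq) auto
  qed
  also have "\<dots> \<approx> on_atom \<alpha> (?W (map (apfst ((*) ?a)) Lf @ map (apsnd (seq_out f)) ?L'))"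
    using wsum_Cons_wsum[of ?a "map (apsnd sys) Lf" "map (apsnd sys) (map (apsnd (seq_out f)) ?L')"]
    by (simp only: map_append map_apsnd_apfst wsum.simps eqv_Seq_right)
  finally show ?thesis
    by (rule has_expansionI) (rule deriv_Seq_eq_list_weight[OF Le(2) Lf(2), symmetric])
qed

lemma has_expansion_Loop:
  assumes "has_expansion \<alpha> e"
  shows "has_expansion \<alpha> (Loop e b)"
proof (cases "beval \<alpha> b")
  case False
  have "on_atom \<alpha> (Loop e b) \<approx> on_atom \<alpha> (GChoice (Seq e (Loop e b)) b (Test BOne))"
    by (rule eqv_Seq_right, rule eqv.L1)
  also have "\<dots> \<approx> on_atom \<alpha> (sys Acc)"
    using False by (simp add: on_atom_GChoice_neg)
  finally show ?thesis
    using False by (intro has_expansion_single) auto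
next
  case True
  obtain Le where Le: "on_atom \<alpha> e \<approx> on_atom \<alpha> (wsum (map (apsnd sys) Le))"
    "list_weight Le = deriv st e \<alpha>"
    using assms by (rule has_expansionE)
  let ?W = "\<lambda>L. wsum (map (apsnd sys) L)"
  let ?a = "list_weight Le Acc"
  let ?L' = "filter (\<lambda>(r, d). d \<noteq> Acc) Le"
  have "e \<approx> GChoice (WChoice (?W ?L') 1 ?a (Test BOne)) (atom_test \<alpha>) e"
    using Le(1) by (rule eqv_GChoice_expansion)
  then have "on_atom \<alpha> (Loop e b)
      \<approx> on_atom \<alpha> (GChoice (Seq (odot (st ?a * 1)) (Seq (?W ?L') (Loop e b))) b (Test BOne))"
    by (rule eqv.L2)
  also have "\<dots> \<approx> on_atom \<alpha> (Seq (odot (st ?a)) (Seq (?W ?L') (Loop e b)))"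
    using on_atom_GChoice_pos[OF True] by simp
  also have "\<dots> \<approx> on_atom \<alpha> (Seq (odot (st ?a)) (?W (map (apsnd (seq_out (Loop e b))) ?L')))"
    by (intro eqv_Seq_right wsum_sys_Seq) auto
  also have "\<dots> \<approx> on_atom \<alpha> (?W (map (apfst ((*) (st ?a))) (map (apsnd (seq_out (Loop e b))) ?L')))"
    unfolding map_apsnd_apfst by (intro eqv_Seq_right odot_Seq_wsum)
  finally show ?thesis
    by (rule has_expansionI) (rule deriv_Loop_eq_list_weight[OF Le(2) True, symmetric])
qed

lemma has_expansion_all: "has_expansion \<alpha> e"
  by (induction e) (auto intro: has_expansion_Act has_expansion_Ret has_expansion_Test
      has_expansion_GChoice has_expansion_WChoice has_expansion_Seq has_expansion_Loop)

lemma expansionE: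
  fixes \<alpha> :: "'t::finite set"
  obtains L where "on_atom \<alpha> e \<approx> on_atom \<alpha> (wsum (map (apsnd sys) L))"
    and "list_weight L = deriv st e \<alpha>"
  using has_expansion_all by (rule has_expansionE)

lemma finite_deriv_support: "finite {d. deriv st e (\<alpha>::'t::finite set) d \<noteq> 0}"
proof -
  obtain L where "list_weight L = deriv st e \<alpha>"
    by (rule expansionE)
  then show ?thesis
    using finite_list_weight_support[of L] by simp
qed

lemma sys_cls_eq:
  assumes "map_out id id (cls st) d = map_out id id (cls st) d'"
  shows "cls st (sys d) = cls st (sys d')"
proof (cases d)
  case (Tr p g)
  with assms obtain g' where "d' = Tr p g'" and "cls st g = cls st g'"
    by (cases d') auto
  with Tr show ?thesis
    by (simp add: cls_eq_iff eqv_Seq_right)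
qed (use assms in \<open>cases d'; simp\<close>)+

lemma eqv_if_pushforward_deriv_eq:
  fixes e f :: "('t::finite, 'p, 'v, 's) exp"
  assumes "\<And>\<alpha>. pushforward (map_out id id (cls st)) (deriv st e \<alpha>)
              = pushforward (map_out id id (cls st)) (deriv st f \<alpha>)"
  shows "e \<approx> f"
proof (rule eqv_if_on_atoms_eqv)
  fix \<alpha> :: "'t set"
  obtain Le where
    Le: "on_atom \<alpha> e \<approx> on_atom \<alpha> (wsum (map (apsnd sys) Le))" "list_weight Le = deriv st e \<alpha>"
    by (rule expansionE)
  obtain Lf where
    Lf: "on_atom \<alpha> f \<approx> on_atom \<alpha> (wsum (map (apsnd sys) Lf))" "list_weight Lf = deriv st f \<alpha>"
    by (rule expansionE)
  have class_weight: "list_weight (map (apsnd (cls st)) (map (apsnd sys) L))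
      = pushforward (cls st \<circ> sys) (list_weight L)"
    for L :: "('s \<times> ('v, 'p, ('t, 'p, 'v, 's) exp) out) list"
    by (simp add: list_weight_map_snd[symmetric] apsnd_compose comp_def)
  have "pushforward (cls st \<circ> sys) (deriv st e \<alpha>) = pushforward (cls st \<circ> sys) (deriv st f \<alpha>)"
  proof (rule pushforward_factor)
    show "(cls st \<circ> sys) d = (cls st \<circ> sys) d'"
      if "map_out id id (cls st) d = map_out id id (cls st) d'"
      for d d' :: "('v, 'p, ('t, 'p, 'v, 's) exp) out"
      using sys_cls_eq[OF that] by simp
  qed (simp_all add: finite_deriv_support assms)
  then have "list_weight (map (apsnd (cls st)) (map (apsnd sys) Le))
      = list_weight (map (apsnd (cls st)) (map (apsnd sys) Lf))"
    unfolding class_weight Le(2) Lf(2) .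
  then have "wsum (map (apsnd sys) Le) \<approx> wsum (map (apsnd sys) Lf)"
    by (rule wsum_eqv_if_class_weight_eq)
  then have "on_atom \<alpha> (wsum (map (apsnd sys) Le)) \<approx> on_atom \<alpha> (wsum (map (apsnd sys) Lf))"
    by (rule eqv_Seq_right)
  then show "on_atom \<alpha> e \<approx> on_atom \<alpha> f"
    by (rule eqv.trans[OF eqv.trans[OF Le(1)] eqv.sym[OF Lf(1)]])
qed

lemma is_aut_deriv: "is_aut UNIV (deriv st :: ('t::finite, 'p, 'v, 's) exp \<Rightarrow> _)"
  by (simp add: is_aut_def finite_deriv_support)

lemma eqv_iff_pushforward_deriv_eq:
  fixes e f :: "('t::finite, 'p, 'v, 's) exp"
    and dbar :: "('t, 'p, 'v, 's) exp set \<Rightarrow> 't set \<Rightarrow> ('v, 'p, ('t, 'p, 'v, 's) exp set) out \<Rightarrow> 's"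
  assumes "is_hom UNIV (deriv st) (quot st) dbar (cls st)"
  shows "e \<approx> f \<longleftrightarrow> (\<forall>\<alpha>. pushforward (map_out id id (cls st)) (deriv st e \<alpha>)
                          = pushforward (map_out id id (cls st)) (deriv st f \<alpha>))"
proof -
  have dbar_cls: "pushforward (map_out id id (cls st)) (deriv st g \<alpha>) = dbar (cls st g) \<alpha>" for g \<alpha>
    using assms unfolding is_hom_iff_pushforward[OF is_aut_deriv] by simp
  show ?thesis
  proof
    assume "e \<approx> f"
    then have "cls st e = cls st f"
      by (simp add: cls_eq_iff)
    then show "\<forall>\<alpha>. pushforward (map_out id id (cls st)) (deriv st e \<alpha>)
                 = pushforward (map_out id id (cls st)) (deriv st f \<alpha>)"
      by (simp add: dbar_cls)
  next
    assume "\<forall>\<alpha>. pushforward (map_out id id (cls st)) (deriv st e \<alpha>)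
             = pushforward (map_out id id (cls st)) (deriv st f \<alpha>)"
    then show "e \<approx> f"
      by (intro eqv_if_pushforward_deriv_eq) simp
  qed
qed

section \<open>Solutions\<close>

lemma deriv_gsum: "\<alpha> \<in> set \<Phi> \<Longrightarrow> deriv st (gsum \<Phi> F) (\<alpha>::'t::finite set) = deriv st (F \<alpha>) \<alpha>"
  by (induction \<Phi>) (auto simp: atom_test_iff)

lemma deriv_wsum_sys_h:
  "deriv st (wsum (map (apsnd (sys_h h)) L)) \<alpha>
     = list_weight (map (apsnd (map_out id id (\<lambda>x. Seq (Test BOne) (h x)))) L)"
proof (induction L)
  case Nil
  then show ?case
    by (simp add: odot_def fun_eq_iff)
next
  case (Cons a L)
  obtain r d where a: "a = (r, d)"
    by fastforce
  have "deriv st (sys_h h d) \<alpha> y = (if map_out id id (\<lambda>x. Seq (Test BOne) (h x)) d = y then 1 else 0)" for y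
    by (cases d) (auto split: out.split exp.split)
  with Cons.IH show ?case
    by (simp add: a fun_eq_iff del: id_apply)
qed

lemma pushforward_deriv_sol_rhs:
  fixes \<beta> :: "'x \<Rightarrow> 't::finite set \<Rightarrow> ('v, 'p, 'x) out \<Rightarrow> 's"
    and h :: "'x \<Rightarrow> ('t, 'p, 'v, 's) exp"
  assumes fin: "finite {d. \<beta> x \<alpha> d \<noteq> 0}"
  shows "pushforward (map_out id id (cls st)) (deriv st (sol_rhs \<beta> h x) \<alpha>)
           = pushforward (map_out id id (cls st \<circ> h)) (\<beta> x \<alpha>)"
proof -
  let ?T = "map_out id id (\<lambda>x'. Seq (Test BOne) (h x')) :: ('v, 'p, 'x) out \<Rightarrow> _"
  have "deriv st (sol_rhs \<beta> h x) \<alpha> = deriv st (wsum (map (apsnd (sys_h h)) (weight_list (\<beta> x \<alpha>)))) \<alpha>"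
    unfolding sol_rhs_def weight_list_def using enum_list[of "UNIV :: 't set set"]
    by (simp add: deriv_gsum comp_def)
  also have "\<dots> = pushforward ?T (\<beta> x \<alpha>)"
    by (simp add: deriv_wsum_sys_h list_weight_map_snd list_weight_weight_list[OF fin])
  finally have "pushforward (map_out id id (cls st)) (deriv st (sol_rhs \<beta> h x) \<alpha>)
      = pushforward (map_out id id (cls st) \<circ> ?T) (\<beta> x \<alpha>)"
    by (simp add: pushforward_comp[OF fin])
  also have "map_out id id (cls st) \<circ> ?T = map_out id id (cls st \<circ> h)"
  proof (rule ext)
    fix d :: "('v, 'p, 'x) out"
    show "(map_out id id (cls st) \<circ> ?T) d = map_out id id (cls st \<circ> h) d"
      by (cases d) (simp_all add: cls_eq_iff eqv.S1a)
  qed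
  finally show ?thesis .
qed

end

theorem mainTheorem9:
  fixes st :: "'s::{semiring_0,monoid_mult} \<Rightarrow> 's"
    and X :: "'x set"
    and \<beta> :: "'x \<Rightarrow> ('t::finite) set \<Rightarrow> ('v, 'p, 'x) out \<Rightarrow> 's"
    and dbar :: "('t, 'p, 'v, 's) exp set \<Rightarrow> 't set \<Rightarrow> ('v, 'p, ('t, 'p, 'v, 's) exp set) out \<Rightarrow> 's"
    and h :: "'x \<Rightarrow> ('t, 'p, 'v, 's) exp"
  assumes "positive_sr TYPE('s)"
    and "refinement_sr TYPE('s)"
    and "conway st"
    and "finite X"
    and "is_aut X \<beta>"
    and "is_aut (quot st) dbar"
    and "is_hom UNIV (deriv st) (quot st) dbar (cls st)"
  shows "is_solution st X \<beta> h \<longleftrightarrow> is_hom X \<beta> (quot st) dbar (cls st \<circ> h)"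
proof -
  have dbar_cls: "dbar (cls st e) \<alpha> = pushforward (map_out id id (cls st)) (deriv st e \<alpha>)" for e \<alpha>
    using assms(7) unfolding is_hom_iff_pushforward[OF is_aut_deriv] by blast
  have sol: "pushforward (map_out id id (cls st)) (deriv st (sol_rhs \<beta> h x) \<alpha>)
      = pushforward (map_out id id (cls st \<circ> h)) (\<beta> x \<alpha>)" if "x \<in> X" for x \<alpha>
    using assms(5) that by (intro pushforward_deriv_sol_rhs) (simp add: is_aut_def)
  show ?thesis
    unfolding is_solution_def is_hom_iff_pushforward[OF assms(5)] eqv_iff_pushforward_deriv_eq[OF assms(7)]
    by (auto simp: cls_in_quot dbar_cls sol)
qed

end
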